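(* Let $m,n$ be positive integers with $n$ odd, and let $a_k,b_k\in\mathbb{Z}$ for $k=0,1,\ldots,m$ with $a_0+b_0=0$. Then, for a variable $x$, $$\det\left[x+\tan\pi\frac{a_j+b_k}n\right]_{0\le j,k\le m}-\det\left[\tan\pi\frac{a_j+b_k}n\right]_{0\le j,k\le m}=x\det\left[\tan\pi\frac{a_j+b_k}n\right]_{1\le j,k\le m}\times\prod_{k=1}^m\left(\tan\pi\frac{a_k+b_0}n\times\tan\pi\frac{a_0+b_k}n\right).$$ *)

theory Defs
  imports Complex_Main "Jordan_Normal_Form.Determinant"
begin

end

theory Submission
  imports Defs
begin

text \<open>Subtracting the first row from all other rows and the first column from all other
columns does not change a determinant, and turns the matrix \<open>[x + t j k]\<close> into one in which
\<open>x\<close> survives only in the corner entry; hence the difference of the two determinants is \<open>x\<close>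
times the corner minor, with entries \<open>t j k - t j 0 - t 0 k + t 0 0\<close>. For
\<open>t j k = tan (pi (a j + b k) / n)\<close> we have \<open>t 0 0 = 0\<close> and
\<open>a j + b k = (a j + b 0) + (a 0 + b k)\<close>, so the addition theorem in the form
\<open>tan (\<alpha> + \<beta>) - tan \<alpha> - tan \<beta> = tan \<alpha> tan (\<alpha> + \<beta>) tan \<beta>\<close> makes every entry of the minor
\<open>t j 0 t j k t 0 k\<close>; pulling out the row and column factors gives the product. Oddness of \<open>n\<close>
keeps all tangent arguments away from the poles.\<close>

lemma det_diff_of_corner_update:
  fixes A B :: "'a::comm_ring_1 mat"
  assumes A: "A \<in> carrier_mat (Suc m) (Suc m)" and B: "B \<in> carrier_mat (Suc m) (Suc m)"
    and agree: "\<And>j k. j < Suc m \<Longrightarrow> k < Suc m \<Longrightarrow> (j, k) \<noteq> (0, 0) \<Longrightarrow> A $$ (j, k) = B $$ (j, k)"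
  shows "det A - det B = (A $$ (0, 0) - B $$ (0, 0)) * det (mat_delete A 0 0)"
proof -
  have same_minor: "mat_delete A 0 k = mat_delete B 0 k" for k
    using A B agree by (intro eq_matI) (auto simp: mat_delete_def)
  have "det A - det B = (\<Sum>k<Suc m. A $$ (0, k) * cofactor A 0 k) - (\<Sum>k<Suc m. B $$ (0, k) * cofactor B 0 k)"
    using laplace_expansion_row[OF A, of 0] laplace_expansion_row[OF B, of 0] by simp
  also have "\<dots> = (\<Sum>k<Suc m. (A $$ (0, k) - B $$ (0, k)) * cofactor A 0 k)"
    by (simp add: cofactor_def same_minor left_diff_distrib sum_subtractf)
  also have "\<dots> = (A $$ (0, 0) - B $$ (0, 0)) * cofactor A 0 0"
    using agree by (subst sum.remove[of _ 0]) auto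
  finally show ?thesis by (simp add: cofactor_def)
qed

definition sub_first_row_mat :: "nat \<Rightarrow> 'a::comm_ring_1 mat" where
  "sub_first_row_mat n = mat n n (\<lambda>(i, j). if i = j then 1 else if j = 0 then -1 else 0)"

lemma sub_first_row_mat_carrier [simp]: "sub_first_row_mat n \<in> carrier_mat n n"
  by (simp add: sub_first_row_mat_def)

lemma det_sub_first_row_mat [simp]: "det (sub_first_row_mat n :: 'a::comm_ring_1 mat) = 1"
proof -
  have "det (sub_first_row_mat n :: 'a mat) = prod_list (diag_mat (sub_first_row_mat n :: 'a mat))"
    by (rule det_lower_triangular[of n]) (auto simp: sub_first_row_mat_def)
  also have "diag_mat (sub_first_row_mat n :: 'a mat) = replicate n 1"
    by (rule nth_equalityI) (auto simp: diag_mat_def sub_first_row_mat_def)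
  finally show ?thesis by simp
qed

lemma index_sub_first_row_mat_mult:
  assumes A: "A \<in> carrier_mat n c" and i: "i < n" and k: "k < c"
  shows "(sub_first_row_mat n * A) $$ (i, k) = (if i = 0 then A $$ (0, k) else A $$ (i, k) - A $$ (0, k))"
proof -
  have "(sub_first_row_mat n * A) $$ (i, k)
      = (\<Sum>l<n. (if l = i then A $$ (l, k) else 0) - (if l = 0 \<and> i \<noteq> 0 then A $$ (l, k) else 0))"
    using A i k by (auto simp: sub_first_row_mat_def scalar_prod_def atLeast0LessThan intro!: sum.cong)
  then show ?thesis
    using i by (simp add: sum_subtractf)
qed

lemma index_mult_sub_first_row_mat_transpose:
  assumes A: "A \<in> carrier_mat r n" and j: "j < r" and k: "k < n"
  shows "(A * (sub_first_row_mat n)\<^sup>T) $$ (j, k) = (if k = 0 then A $$ (j, 0) else A $$ (j, k) - A $$ (j, 0))"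
proof -
  have "(A * (sub_first_row_mat n)\<^sup>T) $$ (j, k)
      = (\<Sum>l<n. (if l = k then A $$ (j, l) else 0) - (if l = 0 \<and> k \<noteq> 0 then A $$ (j, l) else 0))"
    using A j k by (auto simp: sub_first_row_mat_def scalar_prod_def atLeast0LessThan intro!: sum.cong)
  then show ?thesis
    using k by (simp add: sum_subtractf)
qed

lemma det_add_const_minus_det:
  fixes T :: "nat \<Rightarrow> nat \<Rightarrow> 'a::comm_ring_1"
  shows "det (mat (Suc m) (Suc m) (\<lambda>(j, k). x + T j k)) - det (mat (Suc m) (Suc m) (\<lambda>(j, k). T j k))
       = x * det (mat m m (\<lambda>(j, k). T (Suc j) (Suc k) - T (Suc j) 0 - T 0 (Suc k) + T 0 0))"
proof -
  let ?L = "sub_first_row_mat (Suc m) :: 'a mat"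
  define M where "M y = mat (Suc m) (Suc m) (\<lambda>(j, k). y + T j k)" for y
  define R where "R y = ?L * M y * ?L\<^sup>T" for y
  have M: "M y \<in> carrier_mat (Suc m) (Suc m)" for y
    by (simp add: M_def)
  have R: "R y \<in> carrier_mat (Suc m) (Suc m)" for y
    unfolding R_def using M by (intro mult_carrier_mat[of _ "Suc m" "Suc m"]) auto
  have det_R: "det (R y) = det (M y)" for y
    unfolding R_def using M
    by (simp add: det_mult[of _ "Suc m"] det_transpose[of _ "Suc m"] mult_carrier_mat[of _ "Suc m" "Suc m"])
  have index_R: "R y $$ (j, k) = (if j = 0 \<and> k = 0 then y + T 0 0 else if j = 0 then T 0 k - T 0 0
      else if k = 0 then T j 0 - T 0 0 else T j k - T j 0 - T 0 k + T 0 0)"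
    if "j < Suc m" "k < Suc m" for y j k
    using that M[of y] mult_carrier_mat[OF sub_first_row_mat_carrier M[of y]]
    by (simp add: R_def index_mult_sub_first_row_mat_transpose index_sub_first_row_mat_mult
        del: index_mult_mat) (simp add: M_def algebra_simps)
  have minor: "mat_delete (R x) 0 0 = mat m m (\<lambda>(j, k). T (Suc j) (Suc k) - T (Suc j) 0 - T 0 (Suc k) + T 0 0)"
    using R[of x] by (intro eq_matI) (auto simp: mat_delete_def index_R)
  have "det (M x) - det (M 0) = x * det (mat_delete (R x) 0 0)"
  proof -
    have "det (R x) - det (R 0) = (R x $$ (0, 0) - R 0 $$ (0, 0)) * det (mat_delete (R x) 0 0)"
      by (rule det_diff_of_corner_update[OF R R]) (auto simp: index_R)
    then show ?thesis
      by (simp add: det_R index_R)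
  qed
  then show ?thesis
    by (simp add: M_def minor)
qed

lemma det_mat_diag: "det (mat_diag n f) = (\<Prod>i<n. f i)"
proof -
  have "det (mat_diag n f) = prod_list (diag_mat (mat_diag n f))"
    by (rule det_lower_triangular[of n]) (auto simp: mat_diag_def)
  also have "diag_mat (mat_diag n f) = map f [0..<n]"
    by (rule nth_equalityI) (auto simp: diag_mat_def mat_diag_def)
  finally show ?thesis
    by (simp add: prod.distinct_set_conv_list[symmetric] atLeast0LessThan)
qed

lemma det_scale_rows_cols:
  fixes S :: "nat \<Rightarrow> nat \<Rightarrow> 'a::comm_ring_1"
  shows "det (mat n n (\<lambda>(j, k). u j * S j k * v k)) = (\<Prod>j<n. u j) * det (mat n n (\<lambda>(j, k). S j k)) * (\<Prod>k<n. v k)"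
proof -
  let ?S = "mat n n (\<lambda>(j, k). S j k)"
  have "mat n n (\<lambda>(j, k). u j * S j k * v k) = mat_diag n u * ?S * mat_diag n v"
    by (rule eq_matI) (auto simp: mat_diag_mult_left[of _ n n] mat_diag_mult_right[of _ n n])
  then show ?thesis
    by (simp add: det_mult[of _ n] mult_carrier_mat[of _ n n] det_mat_diag)
qed

lemma cos_pi_int_div_odd_neq_0:
  assumes "odd n"
  shows "cos (pi * real_of_int z / real n) \<noteq> 0"
proof
  assume "cos (pi * real_of_int z / real n) = 0"
  then obtain i where "odd i" and i: "pi * real_of_int z / real n = real_of_int i * (pi / 2)"
    using cos_zero_iff_int by blast
  have "real n > 0"
    using \<open>odd n\<close> odd_pos by simp
  with i have "real_of_int (2 * z) = real_of_int (i * int n)"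
    by (simp add: field_simps)
  then have "2 * z = i * int n"
    by (simp only: of_int_eq_iff)
  then show False
    using \<open>odd i\<close> \<open>odd n\<close> by (metis dvd_triv_left even_mult_iff even_of_nat)
qed

lemma tan_add_minus_tan:
  fixes p q :: real
  assumes "cos p \<noteq> 0" "cos q \<noteq> 0" "cos (p + q) \<noteq> 0"
  shows "tan (p + q) - tan p - tan q = tan p * tan (p + q) * tan q"
proof -
  have "1 - tan p * tan q \<noteq> 0"
    using assms by (simp add: tan_def cos_add field_simps)
  then show ?thesis
    using tan_add[OF assms] by (simp add: field_simps)
qed

lemma tan_pi_int_div_odd_add_minus_tan:
  assumes "odd n"
  shows "tan (pi * real_of_int (r + s) / real n) - tan (pi * real_of_int r / real n) - tan (pi * real_of_int s / real n)
       = tan (pi * real_of_int r / real n) * tan (pi * real_of_int (r + s) / real n) * tan (pi * real_of_int s / real n)"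
proof -
  have "pi * real_of_int (r + s) / real n = pi * real_of_int r / real n + pi * real_of_int s / real n"
    by (simp add: distrib_left add_divide_distrib)
  then show ?thesis
    using tan_add_minus_tan cos_pi_int_div_odd_neq_0[OF assms] by metis
qed

theorem lemma4p2:
  fixes m n :: nat and a b :: "nat \<Rightarrow> int" and x :: real
  assumes "m > 0" and "n > 0" and "odd n" and "a 0 + b 0 = 0"
  shows "det (mat (m+1) (m+1) (\<lambda>(j,k). x + tan (pi * real_of_int (a j + b k) / real n)))
         - det (mat (m+1) (m+1) (\<lambda>(j,k). tan (pi * real_of_int (a j + b k) / real n)))
       = x * det (mat m m (\<lambda>(j,k). tan (pi * real_of_int (a (j+1) + b (k+1)) / real n)))
           * (\<Prod>k=1..m. tan (pi * real_of_int (a k + b 0) / real n)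
                         * tan (pi * real_of_int (a 0 + b k) / real n))"
proof -
  define t where "t j k = tan (pi * real_of_int (a j + b k) / real n)" for j k
  have t00: "t 0 0 = 0"
    using assms(4) by (simp add: t_def)
  have minor_entry: "t (Suc j) (Suc k) - t (Suc j) 0 - t 0 (Suc k) + t 0 0
      = t (Suc j) 0 * t (Suc j) (Suc k) * t 0 (Suc k)" for j k
  proof -
    have split: "(a (Suc j) + b 0) + (a 0 + b (Suc k)) = a (Suc j) + b (Suc k)"
      using assms(4) by simp
    show ?thesis
      using tan_pi_int_div_odd_add_minus_tan[OF \<open>odd n\<close>, of "a (Suc j) + b 0" "a 0 + b (Suc k)"]
      unfolding split t00 by (simp add: t_def)
  qed
  have "det (mat (Suc m) (Suc m) (\<lambda>(j, k). x + t j k)) - det (mat (Suc m) (Suc m) (\<lambda>(j, k). t j k))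
      = x * det (mat m m (\<lambda>(j, k). t (Suc j) 0 * t (Suc j) (Suc k) * t 0 (Suc k)))"
    by (simp only: det_add_const_minus_det minor_entry)
  also have "\<dots> = x * det (mat m m (\<lambda>(j, k). t (Suc j) (Suc k))) * (\<Prod>k<m. t (Suc k) 0 * t 0 (Suc k))"
    by (simp add: det_scale_rows_cols prod.distrib)
  also have "(\<Prod>k<m. t (Suc k) 0 * t 0 (Suc k)) = (\<Prod>k=1..m. t k 0 * t 0 k)"
    by (simp add: prod.atLeast1_atMost_eq)
  finally show ?thesis
    by (simp add: t_def)
qed

end
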